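(* Let $r\ge 1$, $m=2^r$, let $n$ be an odd positive integer, and let $b$ be a positive integer having property $\mathcal{P}$ with respect to $n$. Then $x^{2^i n}+b^m$ is irreducible over $\mathbb{Z}$ for every integer $i$ with $0\le i\le r$.
   Context: For a positive integer $N$, a positive integer $b$ has property $\mathcal{P}$ with respect to $N$ if either $b$ is a prime number, or $b=(p_1^{b_1}p_2^{b_2}\cdots p_k^{b_k})^d$ where $k\ge 2$, $p_1,\dots,p_k$ are distinct primes, $b_1,\dots,b_k\ge 1$, $\gcd(b_1,\ldots,b_k)=1$, and $d$ is a positive integer with $\gcd(d,N)=1$. A monic polynomial in $\mathbb{Z}[x]$ of degree $\ge 1$ is irreducible over $\mathbb{Z}$ if it is not a product of two polynomials in $\mathbb{Z}[x]$ of degree at least $1$. *)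

theory Defs
  imports "HOL-Computational_Algebra.Computational_Algebra"
begin

definition property_P :: "nat \<Rightarrow> nat \<Rightarrow> bool" where
  "property_P N b \<longleftrightarrow> prime b \<or>
     (\<exists>S e d. finite S \<and> card S \<ge> 2 \<and> (\<forall>p\<in>S. prime p) \<and> (\<forall>p\<in>S. e p \<ge> 1)
        \<and> Gcd (e ` S) = 1 \<and> d > 0 \<and> coprime d N
        \<and> b = (\<Prod>p\<in>S. p ^ e p) ^ d)"

definition irreducible_over_Z :: "int poly \<Rightarrow> bool" where
  "irreducible_over_Z f \<longleftrightarrow> degree f \<ge> 1 \<and>
     \<not> (\<exists>g h. degree g \<ge> 1 \<and> degree h \<ge> 1 \<and> f = g * h)"

end

theory Submission
  imports Defs
begin

text \<open>Induction on i. For i = 0, every root of a factor g of x^n + b^m has absolute value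
  b^(m/n), so |g(0)|^n = b^(m deg g); property P then forces n to divide m deg g, hence deg g,
  since n is odd.

  For the step let F be irreducible and F(x^2) = g h a proper factorisation. The even
  polynomials g(x) g(-x) and h(x) h(-x) multiply to F(x^2)^2, so by unique factorisation
  g(x) g(-x) = F(x^2), the sign being fixed by the constant term. For i = 1 the leading
  coefficient -lc(g)^2 of g(x) g(-x) rules this out, as deg g = n is odd. For i \<ge> 2 the constant
  term b^m has 2-adic valuation 4v and deg g = 2L; a 2-adic Newton polygon argument shows that
  the coefficient of x^(2L) in g(x) g(-x) has valuation exactly 2v + 1, so it cannot vanish.\<close>

abbreviation x_sq :: "'a::comm_ring_1 poly" where "x_sq \<equiv> [:0, 0, 1:]"
abbreviation neg_x :: "'a::comm_ring_1 poly" where "neg_x \<equiv> [:0, -1:]"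

lemma pcompose_x_sq_neg_x [simp]: "pcompose x_sq neg_x = (x_sq :: 'a::comm_ring_1 poly)"
  by (simp add: pcompose_pCons)

lemma pcompose_neg_x_neg_x [simp]: "pcompose neg_x neg_x = ([:0, 1:] :: 'a::comm_ring_1 poly)"
  by (simp add: pcompose_pCons)

lemma pcompose_monom_x_sq: "pcompose (monom (1::'a::comm_ring_1) m) x_sq = monom 1 (2 * m)"
proof (induction m)
  case (Suc m)
  have "x_sq = (monom 1 2 :: 'a poly)"
    by (simp add: monom_altdef power2_eq_square)
  then show ?case
    using Suc by (simp add: monom_Suc pcompose_pCons mult_monom)
qed (simp add: pcompose_1)

lemma poly_even_odd_decomp:
  fixes p :: "'a::comm_ring_1 poly"
  obtains A B where "p = pcompose A x_sq + [:0, 1:] * pcompose B x_sq"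
proof (induction p arbitrary: thesis)
  case 0
  show ?case by (rule 0[of 0 0]) simp
next
  case (pCons a p)
  obtain A B where "p = pcompose A x_sq + [:0, 1:] * pcompose B x_sq"
    using pCons.IH by blast
  then have "pCons a p = pcompose (pCons a B) x_sq + [:0, 1:] * pcompose A x_sq"
    by (simp add: pcompose_pCons algebra_simps)
  then show ?case by (rule pCons.prems)
qed

lemma even_poly_eq_pcompose_x_sq:
  fixes p :: "'a::{idom, ring_char_0} poly"
  assumes "pcompose p neg_x = p"
  obtains U where "p = pcompose U x_sq"
proof -
  obtain A B where AB: "p = pcompose A x_sq + [:0, 1:] * pcompose B x_sq"
    by (rule poly_even_odd_decomp)
  have "pcompose p neg_x = pcompose A x_sq - [:0, 1:] * pcompose B x_sq"
    unfolding AB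
    by (simp add: pcompose_add pcompose_mult pcompose_assoc[symmetric] pcompose_pCons)
  with assms AB have "smult 2 ([:0, 1:] * pcompose B x_sq) = 0"
    by (simp add: algebra_simps)
  with AB show thesis
    using that by simp
qed

lemma pcompose_x_sq_eq_iff [simp]:
  fixes p q :: "'a::idom poly"
  shows "pcompose p x_sq = pcompose q x_sq \<longleftrightarrow> p = q"
  using pcompose_eq_0_iff[of x_sq "p - q"] by (auto simp: pcompose_diff)

lemma pcompose_mult_pcompose_neg_x_even:
  "pcompose (g * pcompose g neg_x) neg_x = (g * pcompose g neg_x :: 'a::comm_ring_1 poly)"
  by (simp add: pcompose_mult pcompose_assoc[symmetric] mult.commute)

lemma degree_mult_pcompose_neg_x:
  fixes g :: "'a::idom poly"
  shows "degree (g * pcompose g neg_x) = 2 * degree g"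
  by (cases "g = 0") (simp_all add: degree_mult_eq degree_pcompose pcompose_eq_0_iff)

lemma lead_coeff_mult_pcompose_neg_x:
  fixes g :: "'a::idom poly"
  shows "lead_coeff (g * pcompose g neg_x) = (-1) ^ degree g * lead_coeff g ^ 2"
  by (simp add: lead_coeff_mult lead_coeff_comp power2_eq_square)

lemma degree_monom_add_const: "m > 0 \<Longrightarrow> degree (monom (1::'a::comm_ring_1) m + [:c:]) = m"
  by (simp add: degree_add_eq_left degree_monom_eq)

lemma lead_coeff_monom_add_const: "m > 0 \<Longrightarrow> lead_coeff (monom (1::'a::comm_ring_1) m + [:c:]) = 1"
  by (cases m) (simp_all add: degree_monom_add_const)

lemma prime_elem_square_eq_mult_associated:
  fixes p :: "'a::algebraic_semidom"
  assumes "prime_elem p" "p * p = a * b" "\<not> is_unit a" "\<not> is_unit b"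
  shows "\<exists>u. is_unit u \<and> a = u * p"
proof -
  have "p \<noteq> 0" using assms(1) by auto
  from assms(1,2) have "p dvd a \<or> p dvd b"
    by (metis dvd_triv_left prime_elem_dvd_mult_iff)
  then show ?thesis
  proof
    assume "p dvd a"
    then obtain w where a: "a = p * w" by blast
    with assms(2) \<open>p \<noteq> 0\<close> have "p = w * b" by (simp add: mult.assoc)
    then have "is_unit w"
      using assms(1,4) irreducibleD[of p w b] prime_elem_imp_irreducible by blast
    with a show ?thesis by (auto simp: mult.commute)
  next
    assume "p dvd b"
    then obtain w where b: "b = p * w" by blast
    with assms(2) \<open>p \<noteq> 0\<close> have p: "p = a * w"
      by (metis mult.left_commute mult_left_cancel)
    then have "is_unit w"
      using assms(1,3) irreducibleD[of p a w] prime_elem_imp_irreducible by blast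
    then have "a = p * (1 div w)"
      using p \<open>is_unit w\<close> by (cases "w = 0") (simp_all add: div_mult_swap)
    with \<open>is_unit w\<close> show ?thesis by (auto simp: mult.commute)
  qed
qed

lemma irreducible_pcompose_x_sq_factor:
  fixes F g h :: "'a::{factorial_ring_gcd, semiring_gcd_mult_normalize, ring_char_0} poly"
  assumes irr: "irreducible F" and fac: "pcompose F x_sq = g * h"
    and "degree g > 0" "degree h > 0"
  shows "\<exists>u. is_unit u \<and> g * pcompose g neg_x = smult u (pcompose F x_sq)"
proof -
  obtain U where U: "g * pcompose g neg_x = pcompose U x_sq"
    using even_poly_eq_pcompose_x_sq pcompose_mult_pcompose_neg_x_even by blast
  obtain V where V: "h * pcompose h neg_x = pcompose V x_sq"
    using even_poly_eq_pcompose_x_sq pcompose_mult_pcompose_neg_x_even by blast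
  have "pcompose (F * F) x_sq = pcompose F x_sq * pcompose (pcompose F x_sq) neg_x"
    by (simp add: pcompose_mult pcompose_assoc[symmetric])
  also have "\<dots> = pcompose (U * V) x_sq"
    unfolding fac by (simp add: pcompose_mult U[symmetric] V[symmetric] algebra_simps)
  finally have "F * F = U * V" by simp
  moreover have "\<not> is_unit U" "\<not> is_unit V"
    using assms(3,4) degree_mult_pcompose_neg_x[of g] degree_mult_pcompose_neg_x[of h]
    by (auto simp: U V degree_pcompose is_unit_poly_iff)
  ultimately obtain u where "is_unit u" "U = u * F"
    using prime_elem_square_eq_mult_associated irr prime_elem_iff_irreducible by blast
  then obtain c where "is_unit c" "U = smult c F"
    by (auto simp: is_unit_poly_iff)
  then show ?thesis
    by (auto simp: U pcompose_smult)
qed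

lemma irreducible_monic_iff:
  fixes f :: "'a::idom_divide poly"
  assumes "lead_coeff f = 1" "degree f > 0"
  shows "irreducible f \<longleftrightarrow> \<not> (\<exists>g h. degree g > 0 \<and> degree h > 0 \<and> f = g * h)"
proof
  assume "irreducible f"
  then show "\<not> (\<exists>g h. degree g > 0 \<and> degree h > 0 \<and> f = g * h)"
    by (auto dest!: irreducibleD simp: is_unit_poly_iff)
next
  assume nontrivial: "\<not> (\<exists>g h. degree g > 0 \<and> degree h > 0 \<and> f = g * h)"
  show "irreducible f"
  proof (rule irreducibleI)
    show "f \<noteq> 0" "\<not> is_unit f"
      using assms by (auto simp: is_unit_poly_iff)
  next
    fix g h assume f: "f = g * h"
    then have lc: "lead_coeff g * lead_coeff h = 1"
      using assms(1) by (simp add: lead_coeff_mult)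
    have "degree g = 0 \<or> degree h = 0"
      using nontrivial f by (metis gr0I)
    then show "is_unit g \<or> is_unit h"
    proof
      assume "degree g = 0"
      with lc show ?thesis
        by (auto elim!: degree_eq_zeroE simp: is_unit_const_poly_iff dest: dvdI[OF sym])
    next
      assume "degree h = 0"
      with lc show ?thesis
        by (auto elim!: degree_eq_zeroE simp: is_unit_const_poly_iff mult.commute dest: dvdI[OF sym])
    qed
  qed
qed

lemma irreducible_pcompose_x_sq_factor_int:
  fixes F g h :: "int poly"
  assumes "irreducible F" "coeff F 0 > 0" "pcompose F x_sq = g * h"
    and "degree g > 0" "degree h > 0"
  shows "g * pcompose g neg_x = pcompose F x_sq"
proof -
  obtain u where u: "is_unit u" and gg: "g * pcompose g neg_x = smult u (pcompose F x_sq)"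
    using irreducible_pcompose_x_sq_factor[OF assms(1,3-5)] by blast
  have "coeff g 0 ^ 2 = u * coeff F 0"
    using arg_cong[OF gg, of "\<lambda>p. coeff p 0"]
    by (simp add: coeff_mult_0 pcompose_coeff_0 poly_0_coeff_0 power2_eq_square)
  then have "u = 1"
    using u assms(2) zero_le_power2[of "coeff g 0"] by (auto simp: zmult_eq_1_iff zdvd1_eq abs_if split: if_splits)
  with gg show ?thesis by simp
qed

lemma irreducible_pcompose_x_sq:
  fixes F :: "int poly"
  assumes "irreducible F" "lead_coeff F = 1" "coeff F 0 > 0"
    and "\<And>g. g * pcompose g neg_x \<noteq> pcompose F x_sq"
  shows "irreducible (pcompose F x_sq)"
proof -
  have "degree F > 0"
  proof (rule ccontr)
    assume "\<not> degree F > 0"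
    then have "F = 1"
      using assms(2) by (auto elim!: degree_eq_zeroE)
    with assms(1) show False by simp
  qed
  then have "degree (pcompose F x_sq) > 0"
    by (simp add: degree_pcompose)
  moreover have "lead_coeff (pcompose F x_sq) = 1"
    using assms(2) by (simp add: lead_coeff_comp)
  ultimately show ?thesis
  proof (subst irreducible_monic_iff; clarify)
    fix g h assume "pcompose F x_sq = g * h" "degree g > 0" "degree h > 0"
    then have "g * pcompose g neg_x = pcompose F x_sq"
      by (rule irreducible_pcompose_x_sq_factor_int[OF assms(1,3)])
    with assms(4) show False by blast
  qed
qed

lemma map_poly_of_int_mult:
  "map_poly (of_int :: int \<Rightarrow> 'a::comm_ring_1) (p * q) = map_poly of_int p * map_poly of_int q"
proof -
  have add: "map_poly (of_int :: int \<Rightarrow> 'a) (p + q) = map_poly of_int p + map_poly of_int q" for p q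
    by (intro poly_eqI) (simp add: coeff_map_poly)
  show ?thesis
    by (induction p) (simp_all add: map_poly_pCons map_poly_smult add)
qed

lemma norm_poly_0_pow_eq:
  fixes p :: "complex poly"
  assumes "\<And>z. poly p z = 0 \<Longrightarrow> cmod z ^ n = c"
  shows "cmod (poly p 0) ^ n = cmod (lead_coeff p) ^ n * c ^ degree p"
proof -
  obtain root where root: "smult (lead_coeff p) (\<Prod>i<degree p. [:-root i, 1:]) = p"
    using complex_poly_decompose' by blast
  have "poly p (root i) = 0" if "i < degree p" for i
    using that by (subst root[symmetric]) (auto simp: poly_prod)
  then have "cmod (root i) ^ n = c" if "i < degree p" for i
    using that assms by blast
  moreover have "poly p 0 = lead_coeff p * (\<Prod>i<degree p. - root i)"
    by (subst root[symmetric]) (simp add: poly_prod)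
  ultimately show ?thesis
    by (simp add: norm_mult prod_norm[symmetric] power_mult_distrib prod_power_distrib)
qed

lemma property_P_gt_1:
  assumes "property_P N b"
  shows "b > 1"
  using assms unfolding property_P_def
proof (elim disjE exE conjE)
  fix S e d
  assume S: "finite S" "card S \<ge> 2" "\<forall>p\<in>S. prime p" and "d > 0"
    and b: "b = (\<Prod>p\<in>S. p ^ e p) ^ d" and e: "\<forall>p\<in>S. e p \<ge> 1"
  have "S \<noteq> {}"
    using S(2) by auto
  then obtain p where p: "p \<in> S"
    by blast
  have "p dvd p ^ e p"
    using e p by (simp add: Suc_le_eq)
  also have "p ^ e p dvd (\<Prod>p\<in>S. p ^ e p)"
    using S(1) p by (rule dvd_prodI)
  finally have "p dvd (\<Prod>p\<in>S. p ^ e p)" .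
  moreover have "(\<Prod>p\<in>S. p ^ e p) \<noteq> 0"
    using S(1,3) by (auto simp: prime_gt_0_nat)
  moreover have "(\<Prod>p\<in>S. p ^ e p) \<noteq> 1"
    using calculation(1) S(3) p by (auto simp: prime_nat_iff)
  ultimately have "(\<Prod>p\<in>S. p ^ e p) > 1"
    by linarith
  then show "b > 1"
    unfolding b using \<open>d > 0\<close> by (rule one_less_power)
qed (rule prime_gt_1_nat)

lemma property_P_pow_eq_imp_dvd:
  fixes N a b k :: nat
  assumes P: "property_P N b" and eq: "a ^ N = b ^ k"
  shows "N dvd k"
proof (cases "a = 0")
  case True
  have "b > 1"
    using P by (rule property_P_gt_1)
  then have "N = 0"
    using eq True by (simp add: power_0_left split: if_splits)
  then have "b ^ k = b ^ 0"
    using eq by simp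
  with \<open>b > 1\<close> show ?thesis
    by (simp add: \<open>N = 0\<close>)
next
  case a0: False
  from P[unfolded property_P_def] show ?thesis
  proof (elim disjE exE conjE)
    assume "prime b"
    then have "multiplicity b (a ^ N) = multiplicity b (b ^ k)"
      using eq by simp
    then have "k = N * multiplicity b a"
      using \<open>prime b\<close> a0 by (simp add: prime_elem_multiplicity_power_distrib multiplicity_same_power prime_gt_1_nat)
    then show ?thesis by simp
  next
    fix S e d
    assume S: "finite S" "\<forall>p\<in>S. prime p" "Gcd (e ` S) = 1" "coprime d N"
      and b: "b = (\<Prod>p\<in>S. p ^ e p) ^ d"
    have "N dvd (k * d) * e p" if p: "p \<in> S" for p
    proof -
      have "prime p" using S p by auto
      have "(\<Prod>p\<in>S. p ^ e p) \<noteq> 0"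
        using S(1,2) by (auto simp: prime_gt_0_nat)
      then have "multiplicity p b = d * e p"
        using S \<open>prime p\<close> p
        by (simp add: b prime_elem_multiplicity_power_distrib multiplicity_prod_prime_powers)
      moreover have "multiplicity p (a ^ N) = multiplicity p (b ^ k)"
        using eq by simp
      ultimately have "N * multiplicity p a = (k * d) * e p"
        using \<open>prime p\<close> a0 b \<open>(\<Prod>p\<in>S. p ^ e p) \<noteq> 0\<close>
        by (simp add: prime_elem_multiplicity_power_distrib)
      then show ?thesis by (metis dvd_triv_left)
    qed
    then have "N dvd Gcd ((*) (k * d) ` e ` S)"
      by (auto intro: Gcd_greatest)
    also have "Gcd ((*) (k * d) ` e ` S) = k * d"
      using S(3) by (simp add: Gcd_mult)
    finally show ?thesis
      using S(4) by (simp add: coprime_commute coprime_dvd_mult_left_iff)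
  qed
qed

lemma abs_coeff_0_pow_of_factor_monom_add_const:
  fixes g h :: "int poly" and C :: int
  assumes f: "monom 1 n + [:C:] = g * h" and lc: "\<bar>lead_coeff g\<bar> = 1"
  shows "\<bar>coeff g 0\<bar> ^ n = \<bar>C\<bar> ^ degree g"
proof -
  define gc :: "complex poly" where "gc = map_poly of_int g"
  have "cmod z ^ n = \<bar>C\<bar>" if "poly gc z = 0" for z
  proof -
    have "monom 1 n + [:of_int C:] = map_poly (of_int :: int \<Rightarrow> complex) (monom 1 n + [:C:])"
      by (intro poly_eqI) (simp add: coeff_map_poly coeff_monom coeff_pCons split: nat.split)
    also have "\<dots> = gc * map_poly of_int h"
      by (simp add: f gc_def map_poly_of_int_mult)
    finally have "z ^ n + of_int C = 0"
      using that by (metis mult_eq_0_iff poly_add poly_pCons poly_0 mult_zero_left add_0_right poly_monom poly_mult mult_1)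
    then have "z ^ n = - of_int C"
      by (simp add: eq_neg_iff_add_eq_0)
    then have "cmod z ^ n = cmod (of_int C :: complex)"
      by (metis norm_minus_cancel norm_power)
    then show ?thesis
      by simp
  qed
  then have "cmod (poly gc 0) ^ n = cmod (lead_coeff gc) ^ n * real_of_int \<bar>C\<bar> ^ degree gc"
    by (rule norm_poly_0_pow_eq)
  moreover have "degree gc = degree g"
    unfolding gc_def by (rule degree_map_poly) simp
  moreover have "poly gc 0 = of_int (coeff g 0)" "lead_coeff gc = of_int (lead_coeff g)"
    unfolding gc_def by (simp_all add: poly_0_coeff_0 coeff_map_poly \<open>degree gc = degree g\<close>[unfolded gc_def])
  ultimately have "real_of_int (\<bar>coeff g 0\<bar> ^ n) = real_of_int (\<bar>C\<bar> ^ degree g)"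
    using lc by (simp flip: of_int_abs)
  then show ?thesis
    by (simp only: of_int_eq_iff)
qed

lemma irreducible_monom_add_pow_property_P:
  fixes n k b :: nat
  assumes "n > 0" "property_P n b" "coprime n k"
  shows "irreducible (monom 1 n + [:int b ^ k:])" (is "irreducible ?f")
proof (subst irreducible_monic_iff; (intro notI)?; (elim exE conjE)?)
  show "lead_coeff ?f = 1"
    using assms(1) by (rule lead_coeff_monom_add_const)
  show "degree ?f > 0"
    using assms(1) by (simp only: degree_monom_add_const)
  fix g h :: "int poly"
  assume "degree g > 0" "degree h > 0" and f: "?f = g * h"
  then have "g \<noteq> 0" "h \<noteq> 0" by auto
  then have deg: "degree g + degree h = n"
    using f degree_monom_add_const[OF assms(1)] by (metis degree_mult_eq)
  have "lead_coeff g * lead_coeff h = 1"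
    using f lead_coeff_monom_add_const[OF assms(1)] by (metis lead_coeff_mult)
  then have "\<bar>lead_coeff g\<bar> = 1"
    by (metis dvd_triv_left zdvd1_eq)
  with f have "\<bar>coeff g 0\<bar> ^ n = int (b ^ (k * degree g))"
    by (simp add: abs_coeff_0_pow_of_factor_monom_add_const power_mult)
  then have "nat (\<bar>coeff g 0\<bar> ^ n) = b ^ (k * degree g)"
    by (simp only: nat_int)
  then have "nat \<bar>coeff g 0\<bar> ^ n = b ^ (k * degree g)"
    by (simp add: nat_power_eq)
  then have "n dvd k * degree g"
    using assms(2) property_P_pow_eq_imp_dvd by blast
  then have "n dvd degree g"
    using assms(3) by (simp add: coprime_dvd_mult_right_iff)
  then have "n \<le> degree g"
    using \<open>degree g > 0\<close> by (rule dvd_imp_le)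
  with deg \<open>degree h > 0\<close> show False
    by linarith
qed

lemma sum_atMost_double_symmetric:
  fixes T :: "nat \<Rightarrow> 'a::comm_monoid_add"
  assumes "\<And>i. i \<le> 2 * m \<Longrightarrow> T (2 * m - i) = T i"
  shows "(\<Sum>i\<le>2 * m. T i) = T m + (\<Sum>i<m. T i) + (\<Sum>i<m. T i)"
proof -
  have "{..2 * m} = {..<m} \<union> insert m {m<..2 * m}" by auto
  then have "(\<Sum>i\<le>2 * m. T i) = (\<Sum>i<m. T i) + (T m + (\<Sum>i\<in>{m<..2 * m}. T i))"
    by (simp only:) (subst sum.union_disjoint; auto)
  also have "(\<Sum>i\<in>{m<..2 * m}. T i) = (\<Sum>i<m. T (2 * m - i))"
    by (rule sum.reindex_bij_witness[of _ "\<lambda>i. 2 * m - i" "\<lambda>i. 2 * m - i"]) auto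
  also have "\<dots> = (\<Sum>i<m. T i)"
    using assms by (intro sum.cong) auto
  finally show ?thesis by (simp add: ac_simps)
qed

lemma coeff_mult_pcompose_neg_x_even:
  fixes g :: "'a::comm_ring_1 poly"
  shows "coeff (g * pcompose g neg_x) (2 * m) =
     (-1) ^ m * coeff g m ^ 2 + 2 * (\<Sum>i<m. (-1) ^ i * (coeff g i * coeff g (2 * m - i)))"
proof -
  define T where "T i = (-1) ^ i * (coeff g i * coeff g (2 * m - i))" for i
  have sign: "(-1 :: 'a) ^ (2 * m - i) = (-1) ^ i" if "i \<le> 2 * m" for i
    using that by (simp add: minus_one_power_iff)
  have "coeff (g * pcompose g neg_x) (2 * m) = (\<Sum>i\<le>2 * m. T i)"
    unfolding coeff_mult T_def
    by (intro sum.cong refl) (simp add: coeff_pcompose_linear sign mult.left_commute)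
  also have "\<dots> = T m + (\<Sum>i<m. T i) + (\<Sum>i<m. T i)"
    by (rule sum_atMost_double_symmetric)
      (simp add: T_def sign mult.commute[of "coeff g (2 * m - _)"])
  also have "T m = (-1) ^ m * coeff g m ^ 2"
    by (simp add: T_def power2_eq_square)
  finally show ?thesis
    unfolding T_def by (simp only: mult_2 add.assoc)
qed

lemma two_pow_dvd_coeff_mult_pcompose_neg_x_even:
  fixes g :: "'a::comm_ring_1 poly"
  assumes "\<And>i. i < m \<Longrightarrow> 2 ^ e dvd coeff g i * coeff g (2 * m - i)"
  shows "2 ^ Suc e dvd coeff (g * pcompose g neg_x) (2 * m) - (-1) ^ m * coeff g m ^ 2"
proof -
  have "2 ^ e dvd (\<Sum>i<m. (-1) ^ i * (coeff g i * coeff g (2 * m - i)))"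
    using assms by (intro dvd_sum) simp
  then show ?thesis
    by (simp add: coeff_mult_pcompose_neg_x_even mult_dvd_mono)
qed

lemma power_dvd_mult_of_multiplicity:
  fixes p x y :: "'a::factorial_semiring"
  assumes "prime_elem p" "e \<le> multiplicity p x + multiplicity p y"
  shows "p ^ e dvd x * y"
proof (cases "x = 0 \<or> y = 0")
  case False
  then show ?thesis
    using assms by (intro multiplicity_dvd') (simp add: prime_elem_multiplicity_mult_distrib)
qed auto

text \<open>w i / L is the 2-adic valuation of the i-th coefficient of g(2^(v/L) x). At a coefficient of
  minimal weight the square term outweighs all cross terms of the 2m-th coefficient of g(x) g(-x).\<close>

lemma coeff_mult_pcompose_neg_x_min_weight:
  fixes g :: "int poly" and L v m :: nat
  defines "w i \<equiv> L * multiplicity 2 (coeff g i) + v * i"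
  assumes "L > 0" "coeff g m \<noteq> 0" and min: "\<And>i. coeff g i \<noteq> 0 \<Longrightarrow> w m \<le> w i"
  shows "coeff (g * pcompose g neg_x) (2 * m) \<noteq> 0"
proof
  define e where "e = 2 * multiplicity 2 (coeff g m)"
  have "2 ^ e dvd coeff g i * coeff g (2 * m - i)" if "i < m" for i
  proof (cases "coeff g i = 0 \<or> coeff g (2 * m - i) = 0")
    case False
    then have "2 * w m \<le> w i + w (2 * m - i)"
      using min[of i] min[of "2 * m - i"] by simp
    moreover have "v * i + v * (2 * m - i) = v * (2 * m)"
      using that by (simp flip: add_mult_distrib2)
    ultimately have "L * e \<le> L * (multiplicity 2 (coeff g i) + multiplicity 2 (coeff g (2 * m - i)))"
      unfolding w_def e_def by (simp add: add_mult_distrib2)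
    then show ?thesis
      using \<open>L > 0\<close> by (intro power_dvd_mult_of_multiplicity) simp_all
  qed auto
  then have "2 ^ Suc e dvd coeff (g * pcompose g neg_x) (2 * m) - (-1) ^ m * coeff g m ^ 2"
    by (rule two_pow_dvd_coeff_mult_pcompose_neg_x_even)
  moreover assume "coeff (g * pcompose g neg_x) (2 * m) = 0"
  ultimately have "2 ^ Suc e dvd coeff g m ^ 2"
    by (simp add: minus_one_power_iff split: if_splits)
  moreover have "multiplicity 2 (coeff g m ^ 2) = e"
    using assms(3) by (simp add: e_def prime_elem_multiplicity_power_distrib)
  ultimately show False
    using assms(3) by (subst (asm) power_dvd_iff_le_multiplicity) simp_all
qed

lemma coeff_min_weight_only_at_ends:
  fixes g :: "int poly" and L v :: nat
  defines "w i \<equiv> L * multiplicity 2 (coeff g i) + v * i"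
  assumes "L > 0" "degree g = 2 * L" "coeff g 0 \<noteq> 0" "w (2 * L) = w 0"
    and vanish: "\<And>m. 0 < m \<Longrightarrow> m < 2 * L \<Longrightarrow> coeff (g * pcompose g neg_x) (2 * m) = 0"
    and i: "coeff g i \<noteq> 0" "0 < i" "i < 2 * L"
  shows "w 0 < w i"
proof -
  obtain k where k: "coeff g k \<noteq> 0" and k_min: "\<And>j. coeff g j \<noteq> 0 \<Longrightarrow> w k \<le> w j"
    using ex_has_least_nat[of "\<lambda>j. coeff g j \<noteq> 0" 0 w] assms(4) by blast
  have "k \<le> 2 * L"
    using le_degree[OF k] assms(3) by simp
  moreover have "\<not> (0 < k \<and> k < 2 * L)"
    using coeff_mult_pcompose_neg_x_min_weight[OF assms(2) k, of v] k_min vanish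
    unfolding w_def by blast
  ultimately have "w k = w 0"
    using assms(5) by (cases "k = 0") auto
  then have "w 0 \<le> w i"
    using k_min i(1) by metis
  moreover have "w i \<noteq> w 0"
  proof
    assume "w i = w 0"
    then have "\<And>j. coeff g j \<noteq> 0 \<Longrightarrow> w i \<le> w j"
      using k_min \<open>w k = w 0\<close> by metis
    then have "coeff (g * pcompose g neg_x) (2 * i) \<noteq> 0"
      using coeff_mult_pcompose_neg_x_min_weight[OF assms(2) i(1), of v] unfolding w_def by blast
    with vanish i show False by blast
  qed
  ultimately show ?thesis by simp
qed

text \<open>The 2-adic Newton polygon of g is the segment from (0, 2v) to (2L, 0), with no interior
  coefficient on it; then 2 c_0 c_(2L) is the only term of valuation 2v + 1 in the middle coefficient.\<close>

lemma coeff_mult_pcompose_neg_x_middle_ne_0: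
  fixes g :: "int poly" and L v :: nat
  assumes "L > 0" "coeff g 0 \<noteq> 0" "multiplicity 2 (coeff g 0) = 2 * v"
    and "coeff g (2 * L) \<noteq> 0" "multiplicity 2 (coeff g (2 * L)) = 0"
    and above: "\<And>i. coeff g i \<noteq> 0 \<Longrightarrow> 0 < i \<Longrightarrow> i < 2 * L \<Longrightarrow>
      L * (2 * v) < L * multiplicity 2 (coeff g i) + v * i"
  shows "coeff (g * pcompose g neg_x) (2 * L) \<noteq> 0"
proof
  define c where "c = coeff g"
  define S where "S = (\<Sum>i\<in>{1..<L}. (-1) ^ i * (c i * c (2 * L - i)))"
  assume "coeff (g * pcompose g neg_x) (2 * L) = 0"
  moreover have "(\<Sum>i<L. (-1) ^ i * (c i * c (2 * L - i))) = c 0 * c (2 * L) + S"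
    unfolding S_def using assms(1)
    by (simp add: atLeast0LessThan[symmetric] sum.atLeast_Suc_lessThan)
  ultimately have "0 = (-1) ^ L * c L ^ 2 + 2 * (c 0 * c (2 * L) + S)"
    using coeff_mult_pcompose_neg_x_even[of g L] by (simp add: c_def)
  then have "2 * (c 0 * c (2 * L)) = - ((-1) ^ L * c L ^ 2) - 2 * S"
    by (simp add: algebra_simps)
  moreover have "2 ^ (2 * v + 2) dvd c L ^ 2"
  proof (cases "c L = 0")
    case False
    then have "L * v < L * multiplicity 2 (c L)"
      using above[of L] assms(1) by (simp add: c_def algebra_simps)
    then show ?thesis
      unfolding power2_eq_square by (intro power_dvd_mult_of_multiplicity) simp_all
  qed simp
  moreover have "2 ^ (2 * v + 1) dvd c i * c (2 * L - i)" if "i \<in> {1..<L}" for i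
  proof (cases "c i = 0 \<or> c (2 * L - i) = 0")
    case False
    moreover have "v * i + v * (2 * L - i) = L * (2 * v)"
      using that by (simp flip: add_mult_distrib2)
    ultimately have "L * (2 * v) < L * (multiplicity 2 (c i) + multiplicity 2 (c (2 * L - i)))"
      using above[of i] above[of "2 * L - i"] that by (simp add: c_def algebra_simps)
    then show ?thesis
      by (intro power_dvd_mult_of_multiplicity) simp_all
  qed auto
  then have "2 * 2 ^ (2 * v + 1) dvd 2 * S"
    unfolding S_def by (intro mult_dvd_mono dvd_sum) simp_all
  ultimately have "2 * 2 ^ (2 * v + 1) dvd 2 * (c 0 * c (2 * L))"
    by (simp add: dvd_diff)
  then have "2 ^ (2 * v + 1) dvd c 0 * c (2 * L)"
    by (subst (asm) dvd_times_left_cancel_iff) simp_all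
  with assms(2-5) show False
    by (subst (asm) power_dvd_iff_le_multiplicity) (simp_all add: c_def prime_elem_multiplicity_mult_distrib)
qed

lemma mult_pcompose_neg_x_ne_monom_add_const:
  fixes g :: "int poly" and L v :: nat and C :: int
  assumes "L > 0" "C \<noteq> 0" "multiplicity 2 C = 4 * v"
  shows "g * pcompose g neg_x \<noteq> monom 1 (4 * L) + [:C:]"
proof
  assume eq: "g * pcompose g neg_x = monom 1 (4 * L) + [:C:]"
  have coeff_eq: "coeff (g * pcompose g neg_x) k = (if k = 4 * L then 1 else 0) + (if k = 0 then C else 0)" for k
    unfolding eq by (simp add: coeff_monom coeff_pCons split: nat.split)
  have "coeff g 0 ^ 2 = C"
    using coeff_mult_pcompose_neg_x_even[of g 0] coeff_eq[of 0] assms(1) by simp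
  then have c0: "coeff g 0 \<noteq> 0" "multiplicity 2 (coeff g 0) = 2 * v"
    using assms(2,3) by (auto simp: prime_elem_multiplicity_power_distrib)
  have "degree (g * pcompose g neg_x) = 4 * L"
    unfolding eq using assms(1) by (intro degree_monom_add_const) simp
  then have "degree g = 2 * L"
    by (simp add: degree_mult_pcompose_neg_x)
  moreover have "lead_coeff (g * pcompose g neg_x) = 1"
    unfolding eq using assms(1) by (intro lead_coeff_monom_add_const) simp
  then have "lead_coeff g ^ 2 = 1"
    by (simp add: lead_coeff_mult_pcompose_neg_x \<open>degree g = 2 * L\<close>)
  ultimately have c2L: "coeff g (2 * L) \<noteq> 0" "multiplicity 2 (coeff g (2 * L)) = 0"
    by (auto simp: power2_eq_square zmult_eq_1_iff)
  have "L * (2 * v) < L * multiplicity 2 (coeff g i) + v * i"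
    if "coeff g i \<noteq> 0" "0 < i" "i < 2 * L" for i
    using coeff_min_weight_only_at_ends[of L g v i] \<open>degree g = 2 * L\<close> c0 c2L that assms(1)
    by (auto simp: coeff_eq)
  then have "coeff (g * pcompose g neg_x) (2 * L) \<noteq> 0"
    using coeff_mult_pcompose_neg_x_middle_ne_0[OF assms(1) c0 c2L] by blast
  then show False
    using coeff_eq[of "2 * L"] assms(1) by simp
qed

lemma mult_pcompose_neg_x_ne_monom_add_const_odd:
  fixes g :: "'a::linordered_idom poly"
  assumes "odd m"
  shows "g * pcompose g neg_x \<noteq> monom 1 (2 * m) + [:c:]"
proof
  assume eq: "g * pcompose g neg_x = monom 1 (2 * m) + [:c:]"
  have "m > 0"
    using assms by (rule odd_pos)
  have "degree (g * pcompose g neg_x) = 2 * m"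
    unfolding eq using \<open>m > 0\<close> by (intro degree_monom_add_const) simp
  then have "degree g = m"
    by (simp add: degree_mult_pcompose_neg_x)
  have "lead_coeff (g * pcompose g neg_x) = 1"
    unfolding eq using \<open>m > 0\<close> by (intro lead_coeff_monom_add_const) simp
  then have "- (lead_coeff g ^ 2) = 1"
    using assms by (simp add: lead_coeff_mult_pcompose_neg_x \<open>degree g = m\<close>)
  then show False
    by (metis neg_one_even_power zero_le_power2 neg_le_0_iff_le not_one_le_zero add.inverse_inverse)
qed

lemma mult_pcompose_neg_x_ne_monom_add_pow2_power:
  fixes g :: "int poly" and n b r i :: nat
  assumes "odd n" "b > 0" "Suc i \<le> r"
  shows "g * pcompose g neg_x \<noteq> monom 1 (2 * (2 ^ i * n)) + [:int b ^ 2 ^ r:]"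
proof (cases i)
  case 0
  then show ?thesis
    using mult_pcompose_neg_x_ne_monom_add_const_odd[OF assms(1)] by simp
next
  case (Suc j)
  define s where "s = r - 2"
  have "r = s + 2"
    using assms(3) Suc by (simp add: s_def)
  then have "multiplicity 2 (int b ^ 2 ^ r) = 4 * (2 ^ s * multiplicity 2 (int b))"
    using assms(2) by (simp add: prime_elem_multiplicity_power_distrib power_add)
  moreover have "2 * (2 ^ i * n) = 4 * (2 ^ j * n)" "2 ^ j * n > 0"
    using Suc assms(1) by (simp_all add: odd_pos)
  ultimately show ?thesis
    using mult_pcompose_neg_x_ne_monom_add_const[of "2 ^ j * n" "int b ^ 2 ^ r"] assms(2)
    by simp
qed

lemma irreducible_monom_add_pow2_power:
  fixes n b r i :: nat
  assumes "odd n" "property_P n b" "i \<le> r"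
  shows "irreducible (monom 1 (2 ^ i * n) + [:int b ^ 2 ^ r:])"
  using assms(3)
proof (induction i)
  case 0
  have "coprime n (2 ^ r)"
    using assms(1) by simp
  then show ?case
    using irreducible_monom_add_pow_property_P[OF odd_pos[OF assms(1)] assms(2)] by simp
next
  case (Suc i)
  define F where "F = monom 1 (2 ^ i * n) + [:int b ^ 2 ^ r:]"
  have "b > 0"
    using property_P_gt_1[OF assms(2)] by simp
  have "2 ^ i * n > 0"
    using assms(1) by (simp add: odd_pos)
  have F_x_sq: "pcompose F x_sq = monom 1 (2 * (2 ^ i * n)) + [:int b ^ 2 ^ r:]"
    by (simp add: F_def pcompose_add pcompose_monom_x_sq)
  have "irreducible (pcompose F x_sq)"
  proof (rule irreducible_pcompose_x_sq)
    show "irreducible F"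
      using Suc by (simp add: F_def)
    show "lead_coeff F = 1"
      unfolding F_def using \<open>2 ^ i * n > 0\<close> by (rule lead_coeff_monom_add_const)
    show "coeff F 0 > 0"
      using \<open>b > 0\<close> \<open>2 ^ i * n > 0\<close> by (simp add: F_def coeff_monom)
    show "g * pcompose g neg_x \<noteq> pcompose F x_sq" for g
      unfolding F_x_sq using assms(1) \<open>b > 0\<close> Suc.prems
      by (rule mult_pcompose_neg_x_ne_monom_add_pow2_power)
  qed
  then show ?case
    by (simp add: F_x_sq mult.assoc)
qed

theorem lemma4:
  fixes r n b i :: nat
  assumes "r \<ge> 1" and "odd n" and "b > 0" and "property_P n b" and "i \<le> r"
  shows "irreducible_over_Z (monom 1 (2 ^ i * n) + [: int b ^ (2 ^ r) :])"
proof -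
  let ?f = "monom 1 (2 ^ i * n) + [:int b ^ 2 ^ r:]"
  have "2 ^ i * n > 0"
    using assms(2) by (simp add: odd_pos)
  then have "lead_coeff ?f = 1" "degree ?f = 2 ^ i * n"
    by (rule lead_coeff_monom_add_const, rule degree_monom_add_const)
  moreover have "irreducible ?f"
    using assms(2,4,5) by (rule irreducible_monom_add_pow2_power)
  ultimately show ?thesis
    using \<open>2 ^ i * n > 0\<close> irreducible_monic_iff[of ?f]
    unfolding irreducible_over_Z_def by (simp add: Suc_le_eq)
qed

end
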